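(* Consider Algorithm 3 (described in the context) under the Standing Assumption, Matrix Assumption and Gradient Assumption of the context. Let $\mathbb{P}_k$ denote probability conditioned on the algorithm having reached $x_k$ at iteration $k$. If there exists $p\in(0,1]$ such that for all $k\in\mathbb{N}$, $$\mathbb{P}_k\big[\bar g_k^T\bar d_k+\max\{\bar d_k^TH_k\bar d_k,0\}\ge g_k^Td_k+\max\{d_k^TH_kd_k,0\}\big]\ge p,$$ then the event $E_{\tau,big}$ occurs with probability zero, where $E_{\tau,big}$ is the event that there exist an infinite set $\overline{\mathcal K}_\tau\subseteq\mathbb{N}$ and $\bar\tau_{big}>0$ such that $\bar\tau_k=\bar\tau_{big}>\tau_k^{trial}$ and $\bar\xi_k=\bar\xi_{\min}$ for all $k\in\overline{\mathcal K}_\tau$.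
   Context: Problem: $\min_x f(x)$ s.t. $c(x)=0$, $f(x)=\mathbb{E}[F(x,\omega)]$, $c:\mathbb{R}^n\to\mathbb{R}^m$ deterministic. Notation: $g_k=\nabla f(x_k)$, $c_k=c(x_k)$, $J_k=\nabla c(x_k)^T$; $\Delta q(x,\tau,g,H,d)=-\tau(g^Td+\frac12\max\{d^THd,0\})+\|c(x)\|_1$. Standing Assumption: there is an open convex set $\mathcal X$ containing all iterates; $f$ is $C^1$ and bounded below on $\mathcal X$ with $\nabla f$ bounded and $L$-Lipschitz on $\mathcal X$; $c$ and $\nabla c^T$ bounded on $\mathcal X$; each $\nabla c_i$ is $\gamma_i$-Lipschitz on $\mathcal X$; singular values of $\nabla c(x)^T$ bounded away from zero uniformly over $\mathcal X$. $\Gamma:=\sum_i\gamma_i$. Matrix Assumption: deterministic symmetric $H_k$, chosen independently of the stochastic gradients, with $\|H_k\|_2\le\kappa_H$ and $u^TH_ku\ge\zeta\|u\|_2^2$ whenever $J_ku=0$. Algorithm 3 (inputs $x_0$, $\bar\tau_{-1}>0$, $\epsilon,\sigma\in(0,1)$, $\bar\xi_{-1}>0$, $\{\beta_k\}\subset(0,1]$, $\theta\ge0$): at iteration $k$, obtain stochastic gradient $\bar g_k$; $(\bar d_k,\bar y_k)$ solves $H_k\bar d_k+J_k^T\bar y_k=-\bar g_k$, $J_k\bar d_k=-c_k$ (assumed $\bar d_k\ne0$). $\bar\tau_k^{trial}=\infty$ if $\bar g_k^T\bar d_k+\max\{\bar d_k^TH_k\bar d_k,0\}\le0$, else $\frac{(1-\sigma)\|c_k\|_1}{\bar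 g_k^T\bar d_k+\max\{\bar d_k^TH_k\bar d_k,0\}}$; $\bar\tau_k=\bar\tau_{k-1}$ if $\bar\tau_{k-1}\le\bar\tau_k^{trial}$, else $(1-\epsilon)\bar\tau_k^{trial}$. $\bar\xi_k^{trial}=\frac{\Delta q(x_k,\bar\tau_k,\bar g_k,H_k,\bar d_k)}{\bar\tau_k\|\bar d_k\|_2^2}$; $\bar\xi_k=\bar\xi_{k-1}$ if $\bar\xi_{k-1}\le\bar\xi_k^{trial}$, else $(1-\epsilon)\bar\xi_k^{trial}$. With $D_k=(\bar\tau_kL+\Gamma)\|\bar d_k\|_2^2$, $\hat a_k=\beta_k\Delta q(x_k,\bar\tau_k,\bar g_k,H_k,\bar d_k)/D_k$, $\tilde a_k=\hat a_k-4\|c_k\|_1/D_k$, project both onto $[a_k,a_k+\theta\beta_k^2]$, $a_k=\frac{\beta_k\bar\xi_k\bar\tau_k}{\bar\tau_kL+\Gamma}$, giving $\widehat\alpha_k,\widetilde\alpha_k$; $\bar\alpha_k=\widehat\alpha_k$ if $\widehat\alpha_k<1$, $1$ if $\widetilde\alpha_k\le1\le\widehat\alpha_k$, $\widetilde\alpha_k$ if $\widetilde\alpha_k>1$; $x_{k+1}=x_k+\bar\alpha_k\bar d_k$. $\bar\xi_{\min}$ denotes the limit of the nonincreasing positive sequence $\{\bar\xi_k\}$. Gradient Assumption: $\mathbb{E}_k[\bar g_k]=g_k$, $\mathbb{E}_k[\|\bar g_k-g_k\|_2^2]\le M$, with $\mathbb{E}_k$ conditioned on reaching $x_k$ at iteration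 $k$. Deterministic counterparts: $(d_k,y_k)$ solves the same system with $g_k$ in place of $\bar g_k$; $\tau_k^{trial}=\infty$ if $g_k^Td_k+\max\{d_k^TH_kd_k,0\}\le0$, else $\frac{(1-\sigma)\|c_k\|_1}{g_k^Td_k+\max\{d_k^TH_kd_k,0\}}$. *)

theory Defs
  imports "HOL-Probability.Probability"
begin

definition l1norm :: "real^'m \<Rightarrow> real" where
  "l1norm v = (\<Sum>i\<in>UNIV. \<bar>v $ i\<bar>)"

definition sqp_dir :: "real^'n^'n \<Rightarrow> real^'n^'m \<Rightarrow> real^'n \<Rightarrow> real^'m \<Rightarrow> real^'n" where
  "sqp_dir H J g cv = (THE d. \<exists>y. H *v d + transpose J *v y = - g \<and> J *v d = - cv)"

definition curv_term :: "real^'n \<Rightarrow> real^'n^'n \<Rightarrow> real^'n \<Rightarrow> real" where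
  "curv_term g H d = g \<bullet> d + max (d \<bullet> (H *v d)) 0"

text \<open>Delta q(x,tau,g,H,d), with cn = ||c(x)||_1\<close>
definition delta_q :: "real \<Rightarrow> real^'n \<Rightarrow> real^'n^'n \<Rightarrow> real^'n \<Rightarrow> real \<Rightarrow> real" where
  "delta_q tau g H d cn = - tau * (g \<bullet> d + 1/2 * max (d \<bullet> (H *v d)) 0) + cn"

text \<open>Trial merit parameter (infinity encoded in ereal), cn = ||c_k||_1\<close>
definition tau_trial :: "real \<Rightarrow> real \<Rightarrow> real^'n \<Rightarrow> real^'n^'n \<Rightarrow> real^'n \<Rightarrow> ereal" where
  "tau_trial sgm cn g H d =
     (if curv_term g H d \<le> 0 then \<infinity> else ereal ((1 - sgm) * cn / curv_term g H d))"

definition param_update :: "real \<Rightarrow> real \<Rightarrow> ereal \<Rightarrow> real" where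
  "param_update eps prev trial = (if ereal prev \<le> trial then prev else (1 - eps) * real_of_ereal trial)"

definition xi_trial :: "real \<Rightarrow> real^'n \<Rightarrow> real^'n^'n \<Rightarrow> real^'n \<Rightarrow> real \<Rightarrow> real" where
  "xi_trial tau g H d cn = delta_q tau g H d cn / (tau * (norm d)^2)"

definition proj_interval :: "real \<Rightarrow> real \<Rightarrow> real \<Rightarrow> real" where
  "proj_interval lo hi v = min hi (max lo v)"

definition step_size :: "real \<Rightarrow> real \<Rightarrow> real \<Rightarrow> real \<Rightarrow> real \<Rightarrow> real \<Rightarrow> real^'n \<Rightarrow> real^'n^'n \<Rightarrow> real^'n \<Rightarrow> real \<Rightarrow> real" where
  "step_size L Gam theta beta tau xi g H d cn =
     (let D = (tau * L + Gam) * (norm d)^2;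
          ahat = beta * delta_q tau g H d cn / D;
          atil = ahat - 4 * cn / D;
          a = beta * xi * tau / (tau * L + Gam);
          hi = a + theta * beta^2;
          alh = proj_interval a hi ahat;
          alt = proj_interval a hi atil
      in if alh < 1 then alh else if alt \<le> 1 then 1 else alt)"

text \<open>History sigma-algebra F_k generated by the stochastic gradients gbar_0, ..., gbar_{k-1}
  (conditioning on F_k = conditioning on the algorithm having reached x_k).\<close>
definition hist :: "'a measure \<Rightarrow> (nat \<Rightarrow> 'a \<Rightarrow> real^'n) \<Rightarrow> nat \<Rightarrow> 'a measure" where
  "hist M gbar k = sigma (space M) (\<Union>i<k. {gbar i -` A \<inter> space M | A. A \<in> sets borel})"

end

(*
  On a realisation in E_tau,big the nonincreasing merit parameter taubar is eventually constant, equal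
  to tbig.  Call B_k the event that the previous parameter exceeds the deterministic trial value
  tau_k^trial, and A_k the event that the stochastic curvature term dominates the deterministic one.
  Then B_k happens for infinitely many k, but A_k and B_k never happen together from then on: on
  A_k the stochastic trial value is at most tau_k^trial, so on A_k and B_k the update strictly
  decreases taubar.  On the other hand B_k is known at iteration k, while A_k has conditional
  probability at least p given the history; a conditional Borel-Cantelli argument, with the
  nonnegative supermartingale that is multiplied by 1/(1-q) (q = min p (1/2)) whenever B_k but not
  A_k occurs, shows that almost surely A_k and B_k happen together infinitely often whenever B_k
  does.
*)
theory Submission
  imports Defs
begin

section \<open>Measurability of the SQP direction\<close>

lemma measurable_congI:
  "g \<in> measurable N K \<Longrightarrow> (\<And>\<omega>. \<omega> \<in> space N \<Longrightarrow> f \<omega> = g \<omega>) \<Longrightarrow> f \<in> measurable N K"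
  using measurable_cong[of N f g] by simp

lemma borel_measurable_continuous_on_open_comp:
  fixes phi :: "'b::real_normed_vector \<Rightarrow> 'c::real_normed_vector"
  assumes "open X" "continuous_on X phi" "f \<in> borel_measurable M" "\<And>x. x \<in> space M \<Longrightarrow> f x \<in> X"
  shows "(\<lambda>x. phi (f x)) \<in> borel_measurable M"
proof -
  have "(\<lambda>z. indicator X z *\<^sub>R phi z) \<in> borel_measurable borel"
    using assms(1,2) by (intro borel_measurable_continuous_on_indicator) auto
  then have "(\<lambda>x. indicator X (f x) *\<^sub>R phi (f x)) \<in> borel_measurable M"
    using assms(3) by (rule measurable_compose[rotated])
  then show ?thesis by (rule measurable_congI) (simp add: assms(4))
qed

lemma borel_measurable_vec:
  fixes f :: "'a \<Rightarrow> 'b::euclidean_space ^ 'n"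
  assumes "\<And>i. (\<lambda>x. f x $ i) \<in> borel_measurable M"
  shows "f \<in> borel_measurable M"
proof (subst borel_measurable_euclidean_space, intro ballI)
  fix b :: "'b^'n" assume "b \<in> Basis"
  then obtain i u where u: "u \<in> Basis" "b = axis i u" unfolding Basis_vec_def by auto
  then have "(\<lambda>x. f x \<bullet> b) = (\<lambda>x. (f x $ i) \<bullet> u)" by (simp add: inner_axis)
  then show "(\<lambda>x. f x \<bullet> b) \<in> borel_measurable M" using assms[of i] by simp
qed

lemma borel_measurable_vec_nth[measurable (raw)]:
  fixes f :: "'a \<Rightarrow> 'b::euclidean_space ^ 'n"
  assumes "f \<in> borel_measurable M"
  shows "(\<lambda>x. f x $ i) \<in> borel_measurable M"
  by (rule borel_measurable_continuous_on[OF _ assms]) (intro continuous_intros)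

lemma borel_measurable_matrix_vector_mult[measurable (raw)]:
  fixes A :: "'a \<Rightarrow> real^'n^'m" and v :: "'a \<Rightarrow> real^'n"
  assumes "A \<in> borel_measurable M" "v \<in> borel_measurable M"
  shows "(\<lambda>x. A x *v v x) \<in> borel_measurable M"
  by (rule borel_measurable_vec) (use assms in \<open>simp add: matrix_vector_mult_def\<close>)

lemma borel_measurable_det[measurable (raw)]:
  fixes A :: "'a \<Rightarrow> real^'n^'n"
  assumes "A \<in> borel_measurable M"
  shows "(\<lambda>x. det (A x)) \<in> borel_measurable M"
  unfolding det_def using assms by measurable

definition cramer_solution :: "real^'k^'k \<Rightarrow> real^'k \<Rightarrow> real^'k" where
  "cramer_solution A b = (\<chi> k. det (\<chi> i j. if j = k then b $ i else A $ i $ j) / det A)"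

lemma cramer_solution_iff:
  "det A \<noteq> 0 \<Longrightarrow> A *v z = b \<longleftrightarrow> z = cramer_solution A b"
  unfolding cramer_solution_def by (rule cramer)

lemma borel_measurable_cramer_solution[measurable (raw)]:
  fixes A :: "'a \<Rightarrow> real^'k^'k"
  assumes [measurable]: "A \<in> borel_measurable M" "b \<in> borel_measurable M"
  shows "(\<lambda>x. cramer_solution (A x) (b x)) \<in> borel_measurable M"
proof (rule borel_measurable_vec)
  fix k
  have "(\<lambda>x. \<chi> i j. if j = k then b x $ i else A x $ i $ j) \<in> borel_measurable M"
    by (intro borel_measurable_vec) simp
  then show "(\<lambda>x. cramer_solution (A x) (b x) $ k) \<in> borel_measurable M"
    unfolding cramer_solution_def vec_lambda_beta by measurable
qed

text \<open>The saddle-point system defining \<open>sqp_dir\<close>, written as one square system on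
  \<open>real^('n + 'm)\<close> with unknown \<open>join_vec d y\<close>, so that Cramer's rule applies.\<close>

definition kkt_matrix :: "real^'n^'n \<Rightarrow> real^'n^'m \<Rightarrow> real^('n::finite + 'm::finite)^('n + 'm)" where
  "kkt_matrix H J = (\<chi> a b. case (a, b) of
      (Inl i, Inl j) \<Rightarrow> H $ i $ j | (Inl i, Inr j) \<Rightarrow> J $ j $ i
    | (Inr i, Inl j) \<Rightarrow> J $ i $ j | (Inr i, Inr j) \<Rightarrow> 0)"

definition kkt_rhs :: "real^'n \<Rightarrow> real^'m \<Rightarrow> real^('n::finite + 'm::finite)" where
  "kkt_rhs g cv = (\<chi> a. case a of Inl i \<Rightarrow> - g $ i | Inr i \<Rightarrow> - cv $ i)"

definition join_vec :: "real^'n \<Rightarrow> real^'m \<Rightarrow> real^('n::finite + 'm::finite)" where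
  "join_vec d y = (\<chi> a. case a of Inl i \<Rightarrow> d $ i | Inr i \<Rightarrow> y $ i)"

definition left_part :: "real^('n::finite + 'm::finite) \<Rightarrow> real^'n" where
  "left_part z = (\<chi> i. z $ Inl i)"

definition right_part :: "real^('n::finite + 'm::finite) \<Rightarrow> real^'m" where
  "right_part z = (\<chi> i. z $ Inr i)"

lemma left_part_join_vec[simp]: "left_part (join_vec d y) = d"
  and right_part_join_vec[simp]: "right_part (join_vec d y) = y"
  by (simp_all add: left_part_def right_part_def join_vec_def vec_eq_iff)

lemma join_vec_parts: "join_vec (left_part z) (right_part z) = z"
  by (simp add: vec_eq_iff join_vec_def left_part_def right_part_def split: sum.split)

lemma sum_UNIV_Plus:
  "sum f (UNIV :: ('a::finite + 'b::finite) set) = sum (f \<circ> Inl) UNIV + sum (f \<circ> Inr) UNIV"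
  using sum.Plus[of "UNIV :: 'a set" "UNIV :: 'b set" f] by simp

lemma kkt_matrix_mult_Inl:
  "(kkt_matrix H J *v z) $ Inl i = (H *v left_part z + transpose J *v right_part z) $ i"
  by (simp add: kkt_matrix_def matrix_vector_mult_def sum_UNIV_Plus left_part_def right_part_def
      transpose_def)

lemma kkt_matrix_mult_Inr: "(kkt_matrix H J *v z) $ Inr j = (J *v left_part z) $ j"
  by (simp add: kkt_matrix_def matrix_vector_mult_def sum_UNIV_Plus left_part_def)

lemma kkt_matrix_mult_eq_iff:
  "kkt_matrix H J *v z = kkt_rhs g cv \<longleftrightarrow>
     H *v left_part z + transpose J *v right_part z = - g \<and> J *v left_part z = - cv"
proof -
  have "kkt_matrix H J *v z = kkt_rhs g cv \<longleftrightarrow>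
      (\<forall>i. (kkt_matrix H J *v z) $ Inl i = kkt_rhs g cv $ Inl i) \<and>
      (\<forall>i. (kkt_matrix H J *v z) $ Inr i = kkt_rhs g cv $ Inr i)"
    by (metis sum.exhaust vec_eq_iff)
  also have "\<dots> \<longleftrightarrow> (\<forall>i. (H *v left_part z + transpose J *v right_part z) $ i = (- g) $ i) \<and>
      (\<forall>i. (J *v left_part z) $ i = (- cv) $ i)"
    by (simp only: kkt_matrix_mult_Inl kkt_matrix_mult_Inr kkt_rhs_def vec_lambda_beta sum.case
        vector_uminus_component)
  finally show ?thesis by (simp only: vec_eq_iff)
qed

lemma det_kkt_matrix_nonzero:
  fixes H :: "real^'n^'n" and J :: "real^'n^'m"
  assumes inj: "\<And>v. transpose J *v v = 0 \<Longrightarrow> v = 0"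
    and pos: "\<And>u. J *v u = 0 \<Longrightarrow> u \<noteq> 0 \<Longrightarrow> 0 < u \<bullet> (H *v u)"
  shows "det (kkt_matrix H J) \<noteq> 0"
proof -
  have "z = 0" if "kkt_matrix H J *v z = 0" for z
  proof -
    have "kkt_matrix H J *v z = kkt_rhs 0 0"
      using that by (simp add: kkt_rhs_def vec_eq_iff split: sum.split)
    then have eq1: "H *v left_part z = - (transpose J *v right_part z)"
      and eq2: "J *v left_part z = 0"
      unfolding kkt_matrix_mult_eq_iff by (auto simp: eq_neg_iff_add_eq_0)
    have "left_part z \<bullet> (H *v left_part z) = - (right_part z \<bullet> (J *v left_part z))"
      unfolding eq1 inner_minus_right transpose_matrix_vector dot_lmul_matrix[symmetric]
      by (simp add: inner_commute)
    then have "left_part z \<bullet> (H *v left_part z) = 0" using eq2 by simp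
    then have "left_part z = 0" using pos[OF eq2] by force
    moreover have "right_part z = 0"
      by (rule inj) (use eq1 \<open>left_part z = 0\<close> in simp)
    ultimately have "z = join_vec 0 0" by (metis join_vec_parts)
    then show "z = 0" by (simp add: join_vec_def vec_eq_iff split: sum.split)
  qed
  then show ?thesis
    by (simp add: invertible_det_nz[symmetric] invertible_left_inverse matrix_left_invertible_ker)
qed

lemma sqp_dir_eq_cramer_solution:
  fixes H :: "real^'n^'n" and J :: "real^'n^'m"
  assumes inj: "\<And>v. transpose J *v v = 0 \<Longrightarrow> v = 0"
    and pos: "\<And>u. J *v u = 0 \<Longrightarrow> u \<noteq> 0 \<Longrightarrow> 0 < u \<bullet> (H *v u)"
  shows "sqp_dir H J g cv = left_part (cramer_solution (kkt_matrix H J) (kkt_rhs g cv))"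
proof -
  have "det (kkt_matrix H J) \<noteq> 0" using inj pos by (rule det_kkt_matrix_nonzero)
  note solution_iff = cramer_solution_iff[OF this]
  let ?z = "cramer_solution (kkt_matrix H J) (kkt_rhs g cv)"
  have "kkt_matrix H J *v ?z = kkt_rhs g cv" using solution_iff by simp
  show ?thesis unfolding sqp_dir_def
  proof (rule the_equality)
    show "\<exists>y. H *v left_part ?z + transpose J *v y = - g \<and> J *v left_part ?z = - cv"
      using \<open>kkt_matrix H J *v ?z = kkt_rhs g cv\<close> unfolding kkt_matrix_mult_eq_iff by blast
  next
    fix d assume "\<exists>y. H *v d + transpose J *v y = - g \<and> J *v d = - cv"
    then obtain y where "kkt_matrix H J *v join_vec d y = kkt_rhs g cv"
      unfolding kkt_matrix_mult_eq_iff by auto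
    then show "d = left_part ?z" unfolding solution_iff by (metis left_part_join_vec)
  qed
qed

lemma borel_measurable_sqp_dir:
  fixes H :: "'a \<Rightarrow> real^'n^'n" and J :: "'a \<Rightarrow> real^'n^'m"
  assumes [measurable]: "H \<in> borel_measurable M" "J \<in> borel_measurable M"
      "g \<in> borel_measurable M" "cv \<in> borel_measurable M"
    and inj: "\<And>x v. x \<in> space M \<Longrightarrow> transpose (J x) *v v = 0 \<Longrightarrow> v = 0"
    and pos: "\<And>x u. x \<in> space M \<Longrightarrow> J x *v u = 0 \<Longrightarrow> u \<noteq> 0 \<Longrightarrow> 0 < u \<bullet> (H x *v u)"
  shows "(\<lambda>x. sqp_dir (H x) (J x) (g x) (cv x)) \<in> borel_measurable M"
proof -
  have [measurable]: "(\<lambda>x. kkt_matrix (H x) (J x)) \<in> borel_measurable M"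
  proof (intro borel_measurable_vec)
    fix a b show "(\<lambda>x. kkt_matrix (H x) (J x) $ a $ b) \<in> borel_measurable M"
      by (cases a; cases b) (simp_all add: kkt_matrix_def)
  qed
  have [measurable]: "(\<lambda>x. kkt_rhs (g x) (cv x)) \<in> borel_measurable M"
  proof (intro borel_measurable_vec)
    fix a show "(\<lambda>x. kkt_rhs (g x) (cv x) $ a) \<in> borel_measurable M"
      by (cases a) (simp_all add: kkt_rhs_def)
  qed
  have "(\<lambda>x. left_part (cramer_solution (kkt_matrix (H x) (J x)) (kkt_rhs (g x) (cv x))))
      \<in> borel_measurable M"
    unfolding left_part_def by (intro borel_measurable_vec) simp
  then show ?thesis by (rule measurable_congI) (metis sqp_dir_eq_cramer_solution inj pos)
qed

lemma tau_trial_nonneg: "0 \<le> cn \<Longrightarrow> sgm \<le> 1 \<Longrightarrow> 0 \<le> tau_trial sgm cn g H d"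
  by (simp add: tau_trial_def)

lemma tau_trial_antimono:
  assumes "curv_term g H d \<le> curv_term g' H' d'" "0 \<le> cn" "sgm \<le> 1"
  shows "tau_trial sgm cn g' H' d' \<le> tau_trial sgm cn g H d"
  using assms by (auto simp: tau_trial_def intro!: divide_left_mono)

lemma param_update_less:
  assumes "trial < ereal prev" "0 \<le> trial" "0 \<le> eps" "eps \<le> 1"
  shows "param_update eps prev trial < prev"
proof -
  obtain t where t: "trial = ereal t" "0 \<le> t" using assms(1,2) by (cases trial) auto
  then have "(1 - eps) * t \<le> t" using assms(3,4) by (simp add: mult_left_le_one_le)
  then show ?thesis using assms(1) t by (simp add: param_update_def)
qed

lemma param_update_le:
  "0 \<le> trial \<Longrightarrow> 0 \<le> eps \<Longrightarrow> eps \<le> 1 \<Longrightarrow> param_update eps prev trial \<le> prev"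
  using param_update_less[of trial prev eps] by (cases "ereal prev \<le> trial") (auto simp: param_update_def not_le)

lemma l1norm_nonneg: "0 \<le> l1norm v"
  by (simp add: l1norm_def sum_nonneg)

lemma borel_measurable_l1norm[measurable (raw)]:
  "f \<in> borel_measurable M \<Longrightarrow> (\<lambda>x. l1norm (f x)) \<in> borel_measurable M"
  unfolding l1norm_def by measurable

lemma borel_measurable_curv_term[measurable (raw)]:
  assumes [measurable]: "g \<in> borel_measurable M" "H \<in> borel_measurable M" "d \<in> borel_measurable M"
  shows "(\<lambda>x. curv_term (g x) (H x) (d x)) \<in> borel_measurable M"
  unfolding curv_term_def by measurable

lemma borel_measurable_tau_trial[measurable (raw)]:
  assumes [measurable]: "cn \<in> borel_measurable M" "g \<in> borel_measurable M" "H \<in> borel_measurable M"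
    "d \<in> borel_measurable M"
  shows "(\<lambda>x. tau_trial sgm (cn x) (g x) (H x) (d x)) \<in> borel_measurable M"
  unfolding tau_trial_def by measurable

lemma borel_measurable_param_update[measurable (raw)]:
  assumes [measurable]: "prev \<in> borel_measurable M" "trial \<in> borel_measurable M"
  shows "(\<lambda>x. param_update eps (prev x) (trial x)) \<in> borel_measurable M"
  unfolding param_update_def by measurable

lemma borel_measurable_xi_trial[measurable (raw)]:
  assumes [measurable]: "tau \<in> borel_measurable M" "g \<in> borel_measurable M" "H \<in> borel_measurable M"
    "d \<in> borel_measurable M" "cn \<in> borel_measurable M"
  shows "(\<lambda>x. xi_trial (tau x) (g x) (H x) (d x) (cn x)) \<in> borel_measurable M"
  unfolding xi_trial_def delta_q_def by measurable

lemma borel_measurable_step_size[measurable (raw)]: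
  assumes [measurable]: "tau \<in> borel_measurable M" "xi \<in> borel_measurable M" "g \<in> borel_measurable M"
    "H \<in> borel_measurable M" "d \<in> borel_measurable M" "cn \<in> borel_measurable M"
  shows "(\<lambda>x. step_size L Gam theta beta (tau x) (xi x) (g x) (H x) (d x) (cn x)) \<in> borel_measurable M"
  unfolding step_size_def delta_q_def proj_interval_def Let_def by measurable

lemma space_hist[simp]: "space (hist M gbar k) = space M"
  unfolding hist_def by (rule space_measure_of) auto

lemma sets_hist:
  "sets (hist M gbar k) = sigma_sets (space M) (\<Union>i<k. {gbar i -` A \<inter> space M | A. A \<in> sets borel})"
  unfolding hist_def by (rule sets_measure_of) auto

lemma sets_hist_subset: "(\<And>i. gbar i \<in> borel_measurable M) \<Longrightarrow> sets (hist M gbar k) \<subseteq> sets M"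
  unfolding sets_hist by (rule sets.sigma_sets_subset) (auto intro: measurable_sets)

lemma filtration_hist: "filtration (space M) (hist M gbar)"
proof
  fix i j :: nat assume "i \<le> j"
  then show "sets (hist M gbar i) \<le> sets (hist M gbar j)"
    unfolding sets_hist by (intro sigma_sets_mono' UN_mono) auto
qed simp

lemma measurable_hist_gbar: "gbar k \<in> borel_measurable (hist M gbar (Suc k))"
  by (auto simp: measurable_def sets_hist)

section \<open>A conditional Borel-Cantelli lemma\<close>

lemma nn_integral_indicator_compl_le:
  fixes Y :: "'a \<Rightarrow> ennreal"
  assumes "sigma_finite_subalgebra M F"
    and Y: "Y \<in> borel_measurable F" and A: "A \<in> sets M"
    and cond_prob: "AE x in M. ennreal q \<le> nn_cond_exp M F (indicator A) x"
    and q: "0 \<le> q" "q < 1"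
  shows "(\<integral>\<^sup>+x. Y x * indicator (space M - A) x \<partial>M) \<le> ennreal (1 - q) * (\<integral>\<^sup>+x. Y x \<partial>M)"
proof -
  interpret sigma_finite_subalgebra M F by fact
  have [measurable]: "Y \<in> borel_measurable M" "A \<in> sets M"
    using Y A by (auto intro: measurable_from_subalg[OF subalg])
  define a where "a = (\<integral>\<^sup>+x. Y x * indicator A x \<partial>M)"
  define b where "b = (\<integral>\<^sup>+x. Y x * indicator (space M - A) x \<partial>M)"
  define s where "s = (\<integral>\<^sup>+x. Y x \<partial>M)"
  have "s = (\<integral>\<^sup>+x. Y x * indicator A x + Y x * indicator (space M - A) x \<partial>M)"
    unfolding s_def by (rule nn_integral_cong) (auto simp: indicator_def)
  then have s_eq: "s = a + b" unfolding a_def b_def by (simp add: nn_integral_add)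
  have "ennreal q * s = (\<integral>\<^sup>+x. ennreal q * Y x \<partial>M)"
    unfolding s_def by (simp add: nn_integral_cmult)
  also have "\<dots> \<le> (\<integral>\<^sup>+x. Y x * nn_cond_exp M F (indicator A) x \<partial>M)"
    using cond_prob by (intro nn_integral_mono_AE)
      (auto elim!: eventually_mono simp: mult.commute[of _ "Y _"] intro: mult_left_mono)
  also have "\<dots> = a" unfolding a_def using Y by (rule nn_cond_exp_intg) simp
  finally have qs_le_a: "ennreal q * s \<le> a" .
  show ?thesis
  proof (cases "s = \<infinity>")
    case True
    then show ?thesis using q by (simp add: s_def ennreal_mult_top)
  next
    case False
    then have "a \<noteq> \<infinity>" "b \<noteq> \<infinity>" using s_eq by auto
    then obtain a' b' where ab: "a = ennreal a'" "b = ennreal b'" "0 \<le> a'" "0 \<le> b'"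
      by (metis ennreal_cases infinity_ennreal_def)
    have "ennreal (q * (a' + b')) = ennreal q * s" using q by (simp add: s_eq ab ennreal_mult)
    then have "ennreal (q * (a' + b')) \<le> ennreal a'" using qs_le_a ab by simp
    then have "q * (a' + b') \<le> a'" using ab by simp
    then have "b' \<le> (1 - q) * (a' + b')" by (simp add: algebra_simps)
    moreover have "ennreal ((1 - q) * (a' + b')) = ennreal (1 - q) * s"
      using q by (simp add: s_eq ab ennreal_mult)
    ultimately show ?thesis unfolding b_def[symmetric] s_def[symmetric] using ab by (metis ennreal_leI)
  qed
qed

locale conditional_borel_cantelli = prob_space M + filtration "space M" F
  for M :: "'a measure" and F :: "nat \<Rightarrow> 'a measure" +
  fixes A B :: "nat \<Rightarrow> 'a set" and q :: real
  assumes sets_F_subset: "\<And>k. sets (F k) \<subseteq> sets M"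
    and sets_A: "\<And>k. A k \<in> sets (F (Suc k))"
    and sets_B: "\<And>k. B k \<in> sets (F k)"
    and q: "0 < q" "q < 1"
    and cond_prob_A: "\<And>k. AE \<omega> in M. ennreal q \<le> nn_cond_exp M (F k) (indicator (A k)) \<omega>"
begin

lemma subalgebra_F: "subalgebra M (F k)"
  by (simp add: subalgebra_def space_F sets_F_subset)

lemma sigma_finite_subalgebra_F: "sigma_finite_subalgebra M (F k)"
  by (intro finite_measure_subalgebra_is_sigma_finite finite_measure_subalgebra.intro
      finite_measure_subalgebra_axioms.intro finite_measure_axioms subalgebra_F)

lemma sets_A_M[measurable]: "A k \<in> sets M" and sets_B_M[measurable]: "B k \<in> sets M"
  using sets_A sets_B sets_F_subset by blast+

text \<open>\<open>weight n\<close> is a nonnegative supermartingale.  As long as \<open>A k\<close> and \<open>B k\<close> have not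
  occurred together for some \<open>k \<ge> n\<close>, it equals \<open>1 / (1 - q)\<close> raised to the number of
  occurrences of \<open>B k\<close>, so Markov's inequality makes many such occurrences improbable.\<close>

definition weight :: "nat \<Rightarrow> nat \<Rightarrow> 'a \<Rightarrow> ennreal" where
  "weight n N \<omega> = (\<Prod>k\<in>{n..<N}.
     if \<omega> \<in> B k then ennreal (1 / (1 - q)) * indicator (space M - A k) \<omega> else 1)"

lemma weight_measurable: "weight n N \<in> borel_measurable (F N)"
  unfolding weight_def
proof (intro borel_measurable_prod_ennreal)
  fix k assume "k \<in> {n..<N}"
  then have "B k \<in> sets (F N)" "A k \<in> sets (F N)"
    using sets_F_mono[of k N] sets_F_mono[of "Suc k" N] sets_A[of k] sets_B[of k] by auto
  then have [measurable]: "B k \<in> sets (F N)" "space M - A k \<in> sets (F N)"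
    using sets.compl_sets[of "A k" "F N"] by (auto simp: space_F)
  show "(\<lambda>\<omega>. if \<omega> \<in> B k then ennreal (1 / (1 - q)) * indicator (space M - A k) \<omega> else 1)
      \<in> borel_measurable (F N)"
    by measurable
qed

lemma nn_integral_weight_Suc_le: "(\<integral>\<^sup>+\<omega>. weight n (Suc N) \<omega> \<partial>M) \<le> (\<integral>\<^sup>+\<omega>. weight n N \<omega> \<partial>M)"
proof (cases "n \<le> N")
  case False
  then show ?thesis by (simp add: weight_def)
next
  case True
  define R where "R = ennreal (1 / (1 - q))"
  define Y where "Y \<omega> = weight n N \<omega> * indicator (B N) \<omega>" for \<omega>
  have [measurable]: "weight n N \<in> borel_measurable M"
    using measurable_from_subalg[OF subalgebra_F weight_measurable] .
  have Y_F: "Y \<in> borel_measurable (F N)"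
    unfolding Y_def using weight_measurable sets_B by measurable
  then have [measurable]: "Y \<in> borel_measurable M"
    by (rule measurable_from_subalg[OF subalgebra_F])
  have "(\<integral>\<^sup>+\<omega>. weight n (Suc N) \<omega> \<partial>M) =
      (\<integral>\<^sup>+\<omega>. weight n N \<omega> * indicator (space M - B N) \<omega> + R * (Y \<omega> * indicator (space M - A N) \<omega>) \<partial>M)"
    using True by (intro nn_integral_cong)
      (auto simp: weight_def Y_def R_def prod.atLeastLessThan_Suc indicator_def mult.commute)
  also have "\<dots> = (\<integral>\<^sup>+\<omega>. weight n N \<omega> * indicator (space M - B N) \<omega> \<partial>M) +
      R * (\<integral>\<^sup>+\<omega>. Y \<omega> * indicator (space M - A N) \<omega> \<partial>M)"
    by (simp add: nn_integral_add nn_integral_cmult)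
  also have "\<dots> \<le> (\<integral>\<^sup>+\<omega>. weight n N \<omega> * indicator (space M - B N) \<omega> \<partial>M) +
      R * ennreal (1 - q) * (\<integral>\<^sup>+\<omega>. Y \<omega> \<partial>M)"
    unfolding mult.assoc using q by (intro add_left_mono mult_left_mono nn_integral_indicator_compl_le
        [OF sigma_finite_subalgebra_F Y_F sets_A_M cond_prob_A]) auto
  also have "R * ennreal (1 - q) = 1"
    using q by (simp add: R_def ennreal_mult[symmetric])
  also have "(\<integral>\<^sup>+\<omega>. weight n N \<omega> * indicator (space M - B N) \<omega> \<partial>M) + 1 * (\<integral>\<^sup>+\<omega>. Y \<omega> \<partial>M)
      = (\<integral>\<^sup>+\<omega>. weight n N \<omega> \<partial>M)"
    unfolding mult_1 by (subst nn_integral_add[symmetric])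
      (auto intro!: nn_integral_cong simp: Y_def indicator_def)
  finally show ?thesis .
qed

lemma nn_integral_weight_le_1: "(\<integral>\<^sup>+\<omega>. weight n N \<omega> \<partial>M) \<le> 1"
proof -
  have "(\<integral>\<^sup>+\<omega>. weight n N \<omega> \<partial>M) \<le> (\<integral>\<^sup>+\<omega>. weight n 0 \<omega> \<partial>M)"
    by (rule lift_Suc_antimono_le[of "\<lambda>N. \<integral>\<^sup>+\<omega>. weight n N \<omega> \<partial>M", OF nn_integral_weight_Suc_le])
      simp
  then show ?thesis by (simp add: weight_def emeasure_space_1)
qed

lemma weight_eq_power:
  assumes "\<omega> \<in> space M" "\<forall>k\<ge>n. \<omega> \<notin> A k \<inter> B k"
  shows "weight n N \<omega> = ennreal ((1 / (1 - q)) ^ card ({n..<N} \<inter> {k. \<omega> \<in> B k}))"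
proof -
  have "weight n N \<omega> = (\<Prod>k\<in>{n..<N}. if k \<in> {k. \<omega> \<in> B k} then ennreal (1 / (1 - q)) else 1)"
    unfolding weight_def using assms by (intro prod.cong) auto
  also have "\<dots> = ennreal (1 / (1 - q)) ^ card ({n..<N} \<inter> {k. \<omega> \<in> B k})"
    by (simp add: prod.If_cases)
  finally show ?thesis using q by (simp add: ennreal_power)
qed

lemma sets_no_A_many_B:
  "{\<omega>\<in>space M. (\<forall>k\<ge>n. \<omega> \<notin> A k \<inter> B k) \<and> m \<le> card ({n..<N} \<inter> {k. \<omega> \<in> B k})} \<in> sets M"
proof -
  have card_eq: "real (card ({n..<N} \<inter> {k. \<omega> \<in> B k})) = (\<Sum>k\<in>{n..<N}. indicator (B k) \<omega>)" for \<omega>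
    unfolding real_of_card by (subst sum.inter_restrict) (auto simp: indicator_def of_bool_def)
  have "{\<omega>\<in>space M. (\<forall>k\<ge>n. \<omega> \<notin> A k \<inter> B k) \<and> real m \<le> (\<Sum>k\<in>{n..<N}. indicator (B k) \<omega>)} \<in> sets M"
    by measurable
  then show ?thesis by (simp only: card_eq[symmetric] of_nat_le_iff)
qed

lemma emeasure_no_A_many_B_le:
  "emeasure M {\<omega>\<in>space M. (\<forall>k\<ge>n. \<omega> \<notin> A k \<inter> B k) \<and> m \<le> card ({n..<N} \<inter> {k. \<omega> \<in> B k})}
    \<le> ennreal ((1 - q) ^ m)" (is "emeasure M ?S \<le> _")
proof -
  have [measurable]: "weight n N \<in> borel_measurable M"
    using measurable_from_subalg[OF subalgebra_F weight_measurable] .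
  have "ennreal ((1 / (1 - q)) ^ m) * indicator ?S \<omega> \<le> weight n N \<omega>" if "\<omega> \<in> space M" for \<omega>
  proof (cases "\<omega> \<in> ?S")
    case True
    then have "(1 / (1 - q)) ^ m \<le> (1 / (1 - q)) ^ card ({n..<N} \<inter> {k. \<omega> \<in> B k})"
      using q by (intro power_increasing) auto
    then show ?thesis using True weight_eq_power[OF that] by (simp add: ennreal_leI)
  qed simp
  then have "ennreal ((1 / (1 - q)) ^ m) * emeasure M ?S \<le> (\<integral>\<^sup>+\<omega>. weight n N \<omega> \<partial>M)"
    using sets_no_A_many_B by (subst nn_integral_cmult_indicator[symmetric]) (auto intro!: nn_integral_mono)
  also have "\<dots> \<le> 1" by (rule nn_integral_weight_le_1)
  finally have "(1 / (1 - q)) ^ m * measure M ?S \<le> 1"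
    using q by (simp add: emeasure_eq_measure ennreal_mult[symmetric])
  then have "measure M ?S \<le> (1 - q) ^ m"
    using q by (simp add: field_simps)
  then show ?thesis by (simp add: emeasure_eq_measure ennreal_leI)
qed

lemma AE_no_A_imp_finite_B: "AE \<omega> in M. (\<forall>k\<ge>n. \<omega> \<notin> A k \<inter> B k) \<longrightarrow> finite {k. \<omega> \<in> B k}"
proof -
  define S where "S m N = {\<omega>\<in>space M. (\<forall>k\<ge>n. \<omega> \<notin> A k \<inter> B k) \<and> m \<le> card ({n..<N} \<inter> {k. \<omega> \<in> B k})}"
    for m N
  have S_sets: "S m N \<in> sets M" for m N unfolding S_def by (rule sets_no_A_many_B)
  have S_le: "emeasure M (S m N) \<le> ennreal ((1 - q) ^ m)" for m N
    unfolding S_def by (rule emeasure_no_A_many_B_le)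
  have "incseq (S m)" for m
  proof (intro incseq_SucI subsetI)
    fix N \<omega> assume "\<omega> \<in> S m N"
    moreover have "card ({n..<N} \<inter> {k. \<omega> \<in> B k}) \<le> card ({n..<Suc N} \<inter> {k. \<omega> \<in> B k})"
      by (intro card_mono) auto
    ultimately show "\<omega> \<in> S m (Suc N)" unfolding S_def by auto
  qed
  then have "emeasure M (\<Union>N. S m N) \<le> ennreal ((1 - q) ^ m)" for m
    using S_sets by (subst SUP_emeasure_incseq[symmetric]) (auto intro!: SUP_least S_le)
  moreover have "emeasure M (\<Inter>m. \<Union>N. S m N) \<le> emeasure M (\<Union>N. S m N)" for m
    using S_sets by (intro emeasure_mono) auto
  ultimately have "measure M (\<Inter>m. \<Union>N. S m N) \<le> (1 - q) ^ m" for m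
    using q by (simp add: emeasure_eq_measure) (meson order_trans)
  then have "measure M (\<Inter>m. \<Union>N. S m N) \<le> 0"
    using q by (intro LIMSEQ_le_const[OF LIMSEQ_power_zero]) auto
  then have null: "(\<Inter>m. \<Union>N. S m N) \<in> null_sets M"
    using S_sets by (simp add: null_sets_def emeasure_eq_measure antisym)
  show ?thesis
  proof (rule AE_I'[OF null], intro subsetI INT_I)
    fix \<omega> m
    assume "\<omega> \<in> {\<omega> \<in> space M. \<not> ((\<forall>k\<ge>n. \<omega> \<notin> A k \<inter> B k) \<longrightarrow> finite {k. \<omega> \<in> B k})}"
    then have \<omega>: "\<omega> \<in> space M" "\<forall>k\<ge>n. \<omega> \<notin> A k \<inter> B k" and "infinite {k. \<omega> \<in> B k}"
      by auto
    then have "infinite ({k. \<omega> \<in> B k} - {..<n})" by simp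
    then obtain T where T: "finite T" "card T = m" "T \<subseteq> {k. \<omega> \<in> B k} - {..<n}"
      using infinite_arbitrarily_large by blast
    then have "T \<subseteq> {n..<Suc (Max (insert n T))} \<inter> {k. \<omega> \<in> B k}"
      by (auto simp: le_imp_less_Suc)
    then have "m \<le> card ({n..<Suc (Max (insert n T))} \<inter> {k. \<omega> \<in> B k})"
      using T by (metis card_mono finite_Int finite_atLeastLessThan)
    then show "\<omega> \<in> (\<Union>N. S m N)" using \<omega> unfolding S_def by blast
  qed
qed

lemma AE_infinite_B_imp_infinite_A_Int_B:
  "AE \<omega> in M. infinite {k. \<omega> \<in> B k} \<longrightarrow> infinite {k. \<omega> \<in> A k \<inter> B k}"
proof -
  have "AE \<omega> in M. \<forall>n. (\<forall>k\<ge>n. \<omega> \<notin> A k \<inter> B k) \<longrightarrow> finite {k. \<omega> \<in> B k}"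
    unfolding AE_all_countable by (intro allI AE_no_A_imp_finite_B)
  then show ?thesis
  proof eventually_elim
    case (elim \<omega>)
    show ?case
    proof (intro impI notI)
      assume "infinite {k. \<omega> \<in> B k}" "finite {k. \<omega> \<in> A k \<inter> B k}"
      then obtain n where "\<forall>k\<ge>n. \<omega> \<notin> A k \<inter> B k"
        by (metis (mono_tags, lifting) finite_nat_set_iff_bounded_le mem_Collect_eq not_less_eq_eq)
      then show False using elim \<open>infinite {k. \<omega> \<in> B k}\<close> by blast
    qed
  qed
qed

end

lemma conditional_borel_cantelli_AE:
  assumes "prob_space M" "filtration (space M) F" "\<And>k. sets (F k) \<subseteq> sets M"
    and "\<And>k. A k \<in> sets (F (Suc k))" "\<And>k. B k \<in> sets (F k)" "0 < p"
    and "\<And>k. AE \<omega> in M. ennreal p \<le> nn_cond_exp M (F k) (indicator (A k)) \<omega>"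
  shows "AE \<omega> in M. infinite {k. \<omega> \<in> B k} \<longrightarrow> infinite {k. \<omega> \<in> A k \<inter> B k}"
proof -
  interpret prob_space M by fact
  interpret filtration "space M" F by fact
  interpret conditional_borel_cantelli M F A B "min p (1 / 2)"
  proof unfold_locales
    show "sets (F k) \<subseteq> sets M" "A k \<in> sets (F (Suc k))" "B k \<in> sets (F k)" for k
      using assms(3-5) by auto
    show "0 < min p (1 / 2)" "min p (1 / 2) < 1" using assms(6) by auto
    show "AE \<omega> in M. ennreal (min p (1 / 2)) \<le> nn_cond_exp M (F k) (indicator (A k)) \<omega>" for k
      using assms(7)[of k] by eventually_elim (auto intro: order_trans[rotated] simp: ennreal_leI)
  qed
  show ?thesis by (rule AE_infinite_B_imp_infinite_A_Int_B)
qed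

section \<open>Runs of the stochastic SQP method\<close>

lemma continuous_on_lipschitz_rows:
  fixes f :: "'a::real_normed_vector \<Rightarrow> 'b::real_normed_vector ^ 'm"
  assumes "\<And>i y z. y \<in> X \<Longrightarrow> z \<in> X \<Longrightarrow> norm (f y $ i - f z $ i) \<le> L i * norm (y - z)"
    and "\<And>i. 0 \<le> L i"
  shows "continuous_on X f"
proof -
  have "continuous_on X (\<lambda>z. f z $ i)" for i
    using assms by (intro lipschitz_on_continuous_on[of "L i"] lipschitz_onI) (auto simp: dist_norm)
  then show ?thesis using continuous_on_vec_lambda[of X "\<lambda>i z. f z $ i"] by simp
qed

locale sqp_run = filtration "space M" F
  for M :: "'a measure" and F :: "nat \<Rightarrow> 'a measure" +
  fixes X :: "(real^'n) set" and gradf :: "real^'n \<Rightarrow> real^'n"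
    and c :: "real^'n \<Rightarrow> real^'m" and Jc :: "real^'n \<Rightarrow> real^'n^'m"
    and H :: "nat \<Rightarrow> 'a \<Rightarrow> real^'n^'n" and gbar x dbar d :: "nat \<Rightarrow> 'a \<Rightarrow> real^'n"
    and taubar xibar :: "nat \<Rightarrow> 'a \<Rightarrow> real"
    and x0 :: "real^'n" and tau_init xi_init eps sgm L Gam theta :: real and beta :: "nat \<Rightarrow> real"
  assumes X_open: "open X"
    and iter_in_X: "\<And>k \<omega>. \<omega> \<in> space M \<Longrightarrow> x k \<omega> \<in> X"
    and gradf_cont: "continuous_on X gradf" and c_cont: "continuous_on X c"
    and Jc_cont: "continuous_on X Jc"
    and Jc_transpose_inj: "\<And>z v. z \<in> X \<Longrightarrow> transpose (Jc z) *v v = 0 \<Longrightarrow> v = 0"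
    and H_pos: "\<And>k \<omega> u. \<omega> \<in> space M \<Longrightarrow> Jc (x k \<omega>) *v u = 0 \<Longrightarrow> u \<noteq> 0 \<Longrightarrow> 0 < u \<bullet> (H k \<omega> *v u)"
    and H_adapted: "\<And>k. H k \<in> borel_measurable (F k)"
    and gbar_adapted: "\<And>k. gbar k \<in> borel_measurable (F (Suc k))"
    and eps: "0 < eps" "eps < 1" and sgm: "0 < sgm" "sgm < 1"
    and x_init: "\<And>\<omega>. \<omega> \<in> space M \<Longrightarrow> x 0 \<omega> = x0"
    and dbar_def: "\<And>k \<omega>. \<omega> \<in> space M \<Longrightarrow>
        dbar k \<omega> = sqp_dir (H k \<omega>) (Jc (x k \<omega>)) (gbar k \<omega>) (c (x k \<omega>))"
    and taubar_def: "\<And>k \<omega>. \<omega> \<in> space M \<Longrightarrow> taubar k \<omega> =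
        param_update eps (if k = 0 then tau_init else taubar (k - 1) \<omega>)
          (tau_trial sgm (l1norm (c (x k \<omega>))) (gbar k \<omega>) (H k \<omega>) (dbar k \<omega>))"
    and xibar_def: "\<And>k \<omega>. \<omega> \<in> space M \<Longrightarrow> xibar k \<omega> =
        param_update eps (if k = 0 then xi_init else xibar (k - 1) \<omega>)
          (ereal (xi_trial (taubar k \<omega>) (gbar k \<omega>) (H k \<omega>) (dbar k \<omega>) (l1norm (c (x k \<omega>)))))"
    and x_step: "\<And>k \<omega>. \<omega> \<in> space M \<Longrightarrow> x (Suc k) \<omega> = x k \<omega> +
        step_size L Gam theta (beta k) (taubar k \<omega>) (xibar k \<omega>)
          (gbar k \<omega>) (H k \<omega>) (dbar k \<omega>) (l1norm (c (x k \<omega>))) *\<^sub>R dbar k \<omega>"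
    and d_def: "\<And>k \<omega>. \<omega> \<in> space M \<Longrightarrow>
        d k \<omega> = sqp_dir (H k \<omega>) (Jc (x k \<omega>)) (gradf (x k \<omega>)) (c (x k \<omega>))"
begin

definition tau_prev :: "nat \<Rightarrow> 'a \<Rightarrow> real" where
  "tau_prev k \<omega> = (if k = 0 then tau_init else taubar (k - 1) \<omega>)"

definition xi_prev :: "nat \<Rightarrow> 'a \<Rightarrow> real" where
  "xi_prev k \<omega> = (if k = 0 then xi_init else xibar (k - 1) \<omega>)"

lemma measurable_F_Suc: "f \<in> measurable (F k) N \<Longrightarrow> f \<in> measurable (F (Suc k)) N"
  using sets_F_mono[of k "Suc k"] by (auto simp: measurable_def space_F)

lemma measurable_comp_iterate:
  fixes phi :: "real^'n \<Rightarrow> 'b::real_normed_vector"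
  assumes "continuous_on X phi" "x k \<in> borel_measurable (F N)"
  shows "(\<lambda>\<omega>. phi (x k \<omega>)) \<in> borel_measurable (F N)"
  by (rule borel_measurable_continuous_on_open_comp[OF X_open assms]) (simp add: space_F iter_in_X)

lemma measurable_sqp_dir_iterate:
  assumes "x k \<in> borel_measurable (F N)" "H k \<in> borel_measurable (F N)" "g \<in> borel_measurable (F N)"
  shows "(\<lambda>\<omega>. sqp_dir (H k \<omega>) (Jc (x k \<omega>)) (g \<omega>) (c (x k \<omega>))) \<in> borel_measurable (F N)"
proof (rule borel_measurable_sqp_dir)
  show "(\<lambda>\<omega>. Jc (x k \<omega>)) \<in> borel_measurable (F N)" "(\<lambda>\<omega>. c (x k \<omega>)) \<in> borel_measurable (F N)"
    using assms(1) by (auto intro: measurable_comp_iterate Jc_cont c_cont)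
  show "\<And>\<omega> v. \<omega> \<in> space (F N) \<Longrightarrow> transpose (Jc (x k \<omega>)) *v v = 0 \<Longrightarrow> v = 0"
    by (metis Jc_transpose_inj iter_in_X space_F)
  show "\<And>\<omega> u. \<omega> \<in> space (F N) \<Longrightarrow> Jc (x k \<omega>) *v u = 0 \<Longrightarrow> u \<noteq> 0 \<Longrightarrow> 0 < u \<bullet> (H k \<omega> *v u)"
    by (metis H_pos space_F)
qed (use assms in auto)

lemma iterates_adapted:
  "x k \<in> borel_measurable (F k) \<and> tau_prev k \<in> borel_measurable (F k) \<and> xi_prev k \<in> borel_measurable (F k)"
proof (induction k)
  case 0
  show ?case
    by (auto simp: tau_prev_def xi_prev_def space_F x_init intro: measurable_congI[OF measurable_const])
next
  case (Suc k)
  have [measurable]: "x k \<in> borel_measurable (F (Suc k))" "tau_prev k \<in> borel_measurable (F (Suc k))"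
      "xi_prev k \<in> borel_measurable (F (Suc k))" "H k \<in> borel_measurable (F (Suc k))"
      "gbar k \<in> borel_measurable (F (Suc k))"
    using Suc.IH H_adapted gbar_adapted by (auto intro: measurable_F_Suc)
  have [measurable]: "(\<lambda>\<omega>. c (x k \<omega>)) \<in> borel_measurable (F (Suc k))"
    by (rule measurable_comp_iterate[OF c_cont]) measurable
  have [measurable]: "dbar k \<in> borel_measurable (F (Suc k))"
    by (rule measurable_congI[OF measurable_sqp_dir_iterate]) (auto simp: space_F dbar_def)
  have "(\<lambda>\<omega>. param_update eps (tau_prev k \<omega>)
      (tau_trial sgm (l1norm (c (x k \<omega>))) (gbar k \<omega>) (H k \<omega>) (dbar k \<omega>))) \<in> borel_measurable (F (Suc k))"
    by measurable
  then have [measurable]: "taubar k \<in> borel_measurable (F (Suc k))"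
    by (rule measurable_congI) (simp add: space_F taubar_def tau_prev_def)
  have "(\<lambda>\<omega>. param_update eps (xi_prev k \<omega>)
      (ereal (xi_trial (taubar k \<omega>) (gbar k \<omega>) (H k \<omega>) (dbar k \<omega>) (l1norm (c (x k \<omega>))))))
      \<in> borel_measurable (F (Suc k))"
    by measurable
  then have [measurable]: "xibar k \<in> borel_measurable (F (Suc k))"
    by (rule measurable_congI) (simp add: space_F xibar_def xi_prev_def)
  have "(\<lambda>\<omega>. x k \<omega> + step_size L Gam theta (beta k) (taubar k \<omega>) (xibar k \<omega>)
      (gbar k \<omega>) (H k \<omega>) (dbar k \<omega>) (l1norm (c (x k \<omega>))) *\<^sub>R dbar k \<omega>) \<in> borel_measurable (F (Suc k))"
    by measurable
  then have "x (Suc k) \<in> borel_measurable (F (Suc k))"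
    by (rule measurable_congI) (simp add: space_F x_step)
  moreover have "tau_prev (Suc k) = taubar k" "xi_prev (Suc k) = xibar k"
    by (simp_all add: tau_prev_def xi_prev_def fun_eq_iff)
  ultimately show ?case by simp
qed

lemma x_adapted: "x k \<in> borel_measurable (F k)"
  and tau_prev_adapted: "tau_prev k \<in> borel_measurable (F k)"
  using iterates_adapted by blast+

lemma d_adapted: "d k \<in> borel_measurable (F k)"
proof -
  have "(\<lambda>\<omega>. sqp_dir (H k \<omega>) (Jc (x k \<omega>)) (gradf (x k \<omega>)) (c (x k \<omega>))) \<in> borel_measurable (F k)"
    by (intro measurable_sqp_dir_iterate x_adapted H_adapted measurable_comp_iterate[OF gradf_cont])
  then show ?thesis by (rule measurable_congI) (simp add: space_F d_def)
qed

lemma dbar_adapted: "dbar k \<in> borel_measurable (F (Suc k))"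
proof -
  have "(\<lambda>\<omega>. sqp_dir (H k \<omega>) (Jc (x k \<omega>)) (gbar k \<omega>) (c (x k \<omega>))) \<in> borel_measurable (F (Suc k))"
    by (intro measurable_sqp_dir_iterate measurable_F_Suc x_adapted H_adapted gbar_adapted)
  then show ?thesis by (rule measurable_congI) (simp add: space_F dbar_def)
qed

definition curv_dominates :: "nat \<Rightarrow> 'a set" where
  "curv_dominates k = {\<omega>\<in>space M.
     curv_term (gradf (x k \<omega>)) (H k \<omega>) (d k \<omega>) \<le> curv_term (gbar k \<omega>) (H k \<omega>) (dbar k \<omega>)}"

definition tau_prev_exceeds_trial :: "nat \<Rightarrow> 'a set" where
  "tau_prev_exceeds_trial k = {\<omega>\<in>space M.
     tau_trial sgm (l1norm (c (x k \<omega>))) (gradf (x k \<omega>)) (H k \<omega>) (d k \<omega>) < ereal (tau_prev k \<omega>)}"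

lemma sets_curv_dominates: "curv_dominates k \<in> sets (F (Suc k))"
proof -
  have [measurable]: "x k \<in> borel_measurable (F (Suc k))" "H k \<in> borel_measurable (F (Suc k))"
      "d k \<in> borel_measurable (F (Suc k))" "gbar k \<in> borel_measurable (F (Suc k))"
      "dbar k \<in> borel_measurable (F (Suc k))"
    using x_adapted H_adapted d_adapted gbar_adapted dbar_adapted by (auto intro: measurable_F_Suc)
  have [measurable]: "(\<lambda>\<omega>. gradf (x k \<omega>)) \<in> borel_measurable (F (Suc k))"
    by (rule measurable_comp_iterate[OF gradf_cont]) measurable
  have "{\<omega>\<in>space (F (Suc k)). curv_term (gradf (x k \<omega>)) (H k \<omega>) (d k \<omega>)
      \<le> curv_term (gbar k \<omega>) (H k \<omega>) (dbar k \<omega>)} \<in> sets (F (Suc k))"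
    by measurable
  then show ?thesis by (simp add: curv_dominates_def space_F)
qed

lemma sets_tau_prev_exceeds_trial: "tau_prev_exceeds_trial k \<in> sets (F k)"
proof -
  have [measurable]: "x k \<in> borel_measurable (F k)" "H k \<in> borel_measurable (F k)"
      "d k \<in> borel_measurable (F k)" "tau_prev k \<in> borel_measurable (F k)"
    using x_adapted H_adapted d_adapted tau_prev_adapted by auto
  have [measurable]: "(\<lambda>\<omega>. gradf (x k \<omega>)) \<in> borel_measurable (F k)"
    by (rule measurable_comp_iterate[OF gradf_cont x_adapted])
  have [measurable]: "(\<lambda>\<omega>. c (x k \<omega>)) \<in> borel_measurable (F k)"
    by (rule measurable_comp_iterate[OF c_cont x_adapted])
  have "{\<omega>\<in>space (F k). tau_trial sgm (l1norm (c (x k \<omega>))) (gradf (x k \<omega>)) (H k \<omega>) (d k \<omega>)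
      < ereal (tau_prev k \<omega>)} \<in> sets (F k)"
    by measurable
  then show ?thesis by (simp add: tau_prev_exceeds_trial_def space_F)
qed

lemma taubar_eq: "\<omega> \<in> space M \<Longrightarrow> taubar k \<omega> =
    param_update eps (tau_prev k \<omega>) (tau_trial sgm (l1norm (c (x k \<omega>))) (gbar k \<omega>) (H k \<omega>) (dbar k \<omega>))"
  unfolding tau_prev_def by (rule taubar_def)

lemma taubar_le_tau_prev: "\<omega> \<in> space M \<Longrightarrow> taubar k \<omega> \<le> tau_prev k \<omega>"
  using eps sgm by (simp add: taubar_eq param_update_le tau_trial_nonneg l1norm_nonneg)

lemma taubar_antimono: "\<omega> \<in> space M \<Longrightarrow> j \<le> j' \<Longrightarrow> taubar j' \<omega> \<le> taubar j \<omega>"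
  using lift_Suc_antimono_le[of "\<lambda>j. taubar j \<omega>"] taubar_le_tau_prev[of \<omega> "Suc _"]
  by (simp add: tau_prev_def)

lemma taubar_less_tau_prev:
  assumes "\<omega> \<in> curv_dominates k \<inter> tau_prev_exceeds_trial k"
  shows "taubar k \<omega> < tau_prev k \<omega>"
proof -
  have "tau_trial sgm (l1norm (c (x k \<omega>))) (gbar k \<omega>) (H k \<omega>) (dbar k \<omega>)
      \<le> tau_trial sgm (l1norm (c (x k \<omega>))) (gradf (x k \<omega>)) (H k \<omega>) (d k \<omega>)"
    using assms sgm by (intro tau_trial_antimono l1norm_nonneg) (auto simp: curv_dominates_def)
  also have "\<dots> < ereal (tau_prev k \<omega>)"
    using assms by (simp add: tau_prev_exceeds_trial_def)
  finally show ?thesis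
    using assms eps sgm
    by (auto simp: taubar_eq curv_dominates_def intro!: param_update_less tau_trial_nonneg l1norm_nonneg)
qed

lemma stalled_taubar_events:
  assumes \<omega>: "\<omega> \<in> space M" and "infinite K"
    and K: "\<And>k. k \<in> K \<Longrightarrow> taubar k \<omega> = tbig \<and>
      tau_trial sgm (l1norm (c (x k \<omega>))) (gradf (x k \<omega>)) (H k \<omega>) (d k \<omega>) < ereal tbig"
  shows "infinite {k. \<omega> \<in> tau_prev_exceeds_trial k}"
    and "finite {k. \<omega> \<in> curv_dominates k \<inter> tau_prev_exceeds_trial k}"
proof -
  obtain k0 where "k0 \<in> K" using \<open>infinite K\<close> by (metis finite.emptyI ex_in_conv)
  have taubar_const: "taubar k \<omega> = tbig" if "k0 \<le> k" for k
  proof (rule antisym)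
    show "taubar k \<omega> \<le> tbig" using taubar_antimono[OF \<omega> that] K \<open>k0 \<in> K\<close> by simp
    obtain k' where "k \<le> k'" "k' \<in> K" using \<open>infinite K\<close> by (meson infinite_nat_iff_unbounded_le)
    then show "tbig \<le> taubar k \<omega>" using taubar_antimono[OF \<omega>] K by metis
  qed
  then have tau_prev_const: "tau_prev k \<omega> = tbig" if "k0 < k" for k
    using that by (simp add: tau_prev_def)
  have "K - {..k0} \<subseteq> {k. \<omega> \<in> tau_prev_exceeds_trial k}"
    using K \<omega> tau_prev_const by (auto simp: tau_prev_exceeds_trial_def)
  moreover have "infinite (K - {..k0})" using \<open>infinite K\<close> by (simp add: Diff_infinite_finite)
  ultimately show "infinite {k. \<omega> \<in> tau_prev_exceeds_trial k}" by (rule infinite_super)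
  have "k \<le> k0" if "\<omega> \<in> curv_dominates k \<inter> tau_prev_exceeds_trial k" for k
  proof (rule ccontr)
    assume "\<not> k \<le> k0"
    then have "taubar k \<omega> = tau_prev k \<omega>" using taubar_const tau_prev_const by simp
    then show False using taubar_less_tau_prev[OF that] by simp
  qed
  then have "{k. \<omega> \<in> curv_dominates k \<inter> tau_prev_exceeds_trial k} \<subseteq> {..k0}"
    by blast
  then show "finite {k. \<omega> \<in> curv_dominates k \<inter> tau_prev_exceeds_trial k}"
    by (rule finite_subset) simp
qed

lemma AE_taubar_not_stalled:
  assumes "prob_space M" "\<And>k. sets (F k) \<subseteq> sets M" "0 < p"
    and "\<And>k. AE \<omega> in M. ennreal p \<le> nn_cond_exp M (F k) (indicator (curv_dominates k)) \<omega>"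
  shows "AE \<omega> in M. \<not> (\<exists>K::nat set. infinite K \<and> (\<exists>tbig>0. \<forall>k\<in>K.
            taubar k \<omega> = tbig
          \<and> ereal tbig > tau_trial sgm (l1norm (c (x k \<omega>))) (gradf (x k \<omega>)) (H k \<omega>) (d k \<omega>)
          \<and> xibar k \<omega> = lim (\<lambda>j. xibar j \<omega>)))"
proof -
  have "filtration (space M) F" by unfold_locales
  then have "AE \<omega> in M. infinite {k. \<omega> \<in> tau_prev_exceeds_trial k} \<longrightarrow>
      infinite {k. \<omega> \<in> curv_dominates k \<inter> tau_prev_exceeds_trial k}"
    by (rule conditional_borel_cantelli_AE[where A = curv_dominates and B = tau_prev_exceeds_trial,
          OF assms(1) _ assms(2) sets_curv_dominates sets_tau_prev_exceeds_trial assms(3,4)])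
  with AE_space show ?thesis
  proof eventually_elim
    case (elim \<omega>)
    show ?case
    proof
      assume "\<exists>K::nat set. infinite K \<and> (\<exists>tbig>0. \<forall>k\<in>K. taubar k \<omega> = tbig
          \<and> ereal tbig > tau_trial sgm (l1norm (c (x k \<omega>))) (gradf (x k \<omega>)) (H k \<omega>) (d k \<omega>)
          \<and> xibar k \<omega> = lim (\<lambda>j. xibar j \<omega>))"
      then obtain K tbig where "infinite K" "\<And>k. k \<in> K \<Longrightarrow> taubar k \<omega> = tbig \<and>
          tau_trial sgm (l1norm (c (x k \<omega>))) (gradf (x k \<omega>)) (H k \<omega>) (d k \<omega>) < ereal tbig"
        by blast
      from stalled_taubar_events[OF _ this] elim show False by blast
    qed
  qed
qed

end

theorem proposition3p15:
  fixes M :: "'a measure"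
    and f :: "real^'n \<Rightarrow> real" and gradf :: "real^'n \<Rightarrow> real^'n"
    and c :: "real^'n \<Rightarrow> real^'m" and Jc :: "real^'n \<Rightarrow> real^'n^'m"
    and X :: "(real^'n) set" and L :: real and gam :: "'m \<Rightarrow> real"
    and H :: "nat \<Rightarrow> 'a \<Rightarrow> real^'n^'n" and kappaH zeta :: real
    and gbar :: "nat \<Rightarrow> 'a \<Rightarrow> real^'n" and Mvar :: real
    and x dbar d :: "nat \<Rightarrow> 'a \<Rightarrow> real^'n" and taubar xibar :: "nat \<Rightarrow> 'a \<Rightarrow> real"
    and x0 :: "real^'n" and tau_init eps sgm xi_init theta p :: real
    and beta :: "nat \<Rightarrow> real"
  assumes M: "prob_space M"
    \<comment> \<open>Standing Assumption\<close>
    and X_open: "open X" and X_convex: "convex X"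
    and iter_in_X: "\<forall>k. \<forall>\<omega>\<in>space M. x k \<omega> \<in> X"
    and f_deriv: "\<forall>z\<in>X. (f has_derivative (\<lambda>h. gradf z \<bullet> h)) (at z)"
    and f_cont_grad: "continuous_on X gradf"
    and f_bdd_below: "\<exists>lb. \<forall>z\<in>X. lb \<le> f z"
    and grad_bdd: "bounded (gradf ` X)"
    and L_pos: "L > 0"
    and grad_lip: "\<forall>y\<in>X. \<forall>z\<in>X. norm (gradf y - gradf z) \<le> L * norm (y - z)"
    and c_deriv: "\<forall>z\<in>X. (c has_derivative (\<lambda>h. Jc z *v h)) (at z)"
    and c_bdd: "bounded (c ` X)" and J_bdd: "bounded (Jc ` X)"
    and gam_nonneg: "\<forall>i. gam i \<ge> 0"
    and J_lip: "\<forall>i. \<forall>y\<in>X. \<forall>z\<in>X. norm (Jc y $ i - Jc z $ i) \<le> gam i * norm (y - z)"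
    and J_sing: "\<exists>s>0. \<forall>z\<in>X. \<forall>v. s * norm v \<le> norm (transpose (Jc z) *v v)"
    \<comment> \<open>Matrix Assumption\<close>
    and H_meas: "\<forall>k. H k \<in> borel_measurable (hist M gbar k)"
    and H_sym: "\<forall>k. \<forall>\<omega>\<in>space M. transpose (H k \<omega>) = H k \<omega>"
    and H_bdd: "\<forall>k. \<forall>\<omega>\<in>space M. onorm (\<lambda>v. H k \<omega> *v v) \<le> kappaH"
    and zeta_pos: "zeta > 0"
    and H_pd: "\<forall>k. \<forall>\<omega>\<in>space M. \<forall>u. Jc (x k \<omega>) *v u = 0 \<longrightarrow> zeta * (norm u)^2 \<le> u \<bullet> (H k \<omega> *v u)"
    \<comment> \<open>Algorithm 3 parameters\<close>
    and tau_init_pos: "tau_init > 0" and eps: "0 < eps" "eps < 1"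
    and sgm: "0 < sgm" "sgm < 1" and xi_init_pos: "xi_init > 0"
    and beta: "\<forall>k. 0 < beta k \<and> beta k \<le> 1" and theta: "theta \<ge> 0"
    \<comment> \<open>Algorithm 3 iteration (pathwise)\<close>
    and x_init: "\<forall>\<omega>\<in>space M. x 0 \<omega> = x0"
    and dbar_def: "\<forall>k. \<forall>\<omega>\<in>space M. dbar k \<omega> = sqp_dir (H k \<omega>) (Jc (x k \<omega>)) (gbar k \<omega>) (c (x k \<omega>))"
    and dbar_nz: "\<forall>k. \<forall>\<omega>\<in>space M. dbar k \<omega> \<noteq> 0"
    and taubar_def: "\<forall>k. \<forall>\<omega>\<in>space M. taubar k \<omega> =
        param_update eps (if k = 0 then tau_init else taubar (k - 1) \<omega>)
          (tau_trial sgm (l1norm (c (x k \<omega>))) (gbar k \<omega>) (H k \<omega>) (dbar k \<omega>))"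
    and xibar_def: "\<forall>k. \<forall>\<omega>\<in>space M. xibar k \<omega> =
        param_update eps (if k = 0 then xi_init else xibar (k - 1) \<omega>)
          (ereal (xi_trial (taubar k \<omega>) (gbar k \<omega>) (H k \<omega>) (dbar k \<omega>) (l1norm (c (x k \<omega>)))))"
    and x_step: "\<forall>k. \<forall>\<omega>\<in>space M. x (Suc k) \<omega> = x k \<omega> +
        step_size L (\<Sum>i\<in>UNIV. gam i) theta (beta k) (taubar k \<omega>) (xibar k \<omega>)
          (gbar k \<omega>) (H k \<omega>) (dbar k \<omega>) (l1norm (c (x k \<omega>))) *\<^sub>R dbar k \<omega>"
    \<comment> \<open>deterministic counterpart\<close>
    and d_def: "\<forall>k. \<forall>\<omega>\<in>space M. d k \<omega> = sqp_dir (H k \<omega>) (Jc (x k \<omega>)) (gradf (x k \<omega>)) (c (x k \<omega>))"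
    \<comment> \<open>Gradient Assumption\<close>
    and gbar_meas: "\<forall>k. gbar k \<in> borel_measurable M"
    and gbar_int: "\<forall>k i. integrable M (\<lambda>\<omega>. gbar k \<omega> $ i)"
    and unbiased: "\<forall>k i. AE \<omega> in M. real_cond_exp M (hist M gbar k) (\<lambda>\<omega>. gbar k \<omega> $ i) \<omega> = gradf (x k \<omega>) $ i"
    and variance: "\<forall>k. AE \<omega> in M.
        nn_cond_exp M (hist M gbar k) (\<lambda>\<omega>. ennreal ((norm (gbar k \<omega> - gradf (x k \<omega>)))^2)) \<omega> \<le> ennreal Mvar"
    \<comment> \<open>hypothesis of the proposition\<close>
    and p: "0 < p" "p \<le> 1"
    and prob_hyp: "\<forall>k. AE \<omega> in M. ennreal p \<le>
        nn_cond_exp M (hist M gbar k)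
          (indicator {\<omega>\<in>space M. curv_term (gbar k \<omega>) (H k \<omega>) (dbar k \<omega>)
                                   \<ge> curv_term (gradf (x k \<omega>)) (H k \<omega>) (d k \<omega>)}) \<omega>"
  shows "AE \<omega> in M. \<not> (\<exists>K::nat set. infinite K \<and> (\<exists>tbig>0. \<forall>k\<in>K.
            taubar k \<omega> = tbig
          \<and> ereal tbig > tau_trial sgm (l1norm (c (x k \<omega>))) (gradf (x k \<omega>)) (H k \<omega>) (d k \<omega>)
          \<and> xibar k \<omega> = lim (\<lambda>j. xibar j \<omega>)))"
proof -
  have Jc_cont: "continuous_on X Jc"
    using J_lip gam_nonneg by (intro continuous_on_lipschitz_rows) auto
  have c_cont: "continuous_on X c"
    using c_deriv by (intro has_derivative_continuous_on) (auto intro: has_derivative_at_withinI)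
  obtain s where s: "s > 0" "\<And>z v. z \<in> X \<Longrightarrow> s * norm v \<le> norm (transpose (Jc z) *v v)"
    using J_sing by blast
  have Jc_inj: "v = 0" if "z \<in> X" "transpose (Jc z) *v v = 0" for z v
    using s(2)[OF that(1), of v] s(1) that(2) by (simp add: mult_le_0_iff)
  have H_pos: "0 < u \<bullet> (H k \<omega> *v u)" if "\<omega> \<in> space M" "Jc (x k \<omega>) *v u = 0" "u \<noteq> 0" for k \<omega> u
    using H_pd that zeta_pos by (meson less_le_trans mult_pos_pos zero_less_norm_iff zero_less_power)
  interpret sqp_run M "hist M gbar" X gradf c Jc H gbar x dbar d taubar xibar x0 tau_init xi_init
    eps sgm L "\<Sum>i\<in>UNIV. gam i" theta beta
    by (intro sqp_run.intro filtration_hist sqp_run_axioms.intro X_open f_cont_grad c_cont Jc_cont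
        H_pos measurable_hist_gbar eps sgm iter_in_X[rule_format] H_meas[rule_format] x_init[rule_format]
        dbar_def[rule_format] taubar_def[rule_format] xibar_def[rule_format] x_step[rule_format]
        d_def[rule_format]) (assumption | rule Jc_inj)+
  show ?thesis
  proof (rule AE_taubar_not_stalled[OF M sets_hist_subset p(1)])
    show "AE \<omega> in M. ennreal p \<le> nn_cond_exp M (hist M gbar k) (indicator (curv_dominates k)) \<omega>" for k
      unfolding curv_dominates_def using prob_hyp by blast
  qed (use gbar_meas in blast)
qed

end
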